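(* Let $V_{\mathrm{total}}\ge0$, $B_{\mathrm{total}}>0$, $R^S_{\mathrm{total}}>0$, $F_{\mathrm{total}}>0$. Problem (P1): minimize $\max_u T_u(B_u,R_u^S,F_u,\eta_u)$ over $B_u>0$, $R_u^S>0$, $F_u>0$, $\eta_u\in[0,1]$ ($u=1,\dots,U$) subject to $\sum_uV_u(B_u,R_u^S,F_u,\eta_u)\le V_{\mathrm{total}}$, $\sum_uB_u\le B_{\mathrm{total}}$, $\sum_uR_u^S\le R^S_{\mathrm{total}}$, $\sum_uF_u\le F_{\mathrm{total}}$. Problem (P2): minimize $\max_uT_u^{\eta\text{-opt}}(B_u,R_u^S,F_u)$ over $B_u>0$, $R_u^S>0$, $F_u>0$ subject to $\sum_uV_u^{\eta\text{-opt}}(B_u,R_u^S,F_u)\le V_{\mathrm{total}}$, $\sum_uB_u\le B_{\mathrm{total}}$, $\sum_uR_u^S\le R^S_{\mathrm{total}}$, $\sum_uF_u\le F_{\mathrm{total}}$. Then the optimal values (infima) of (P1) and (P2) are equal.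
   Context: There are users $u=1,\dots,U$, each with constants $D_u>0$, $r_u>0$, $\rho_u>0$, $\zeta_u\in(0,1)$. For $B_u>0$, $R_u^S>0$, $F_u>0$, $\eta_u\in[0,1]$, write $c_u=B_ur_u$ and define $T_u(B_u,R_u^S,F_u,\eta_u)$ and $V_u(B_u,R_u^S,F_u,\eta_u)$ piecewise: (a) if $\eta_uc_u\ge F_u/\rho_u$, $\zeta_uF_u/\rho_u+(1-\eta_u)c_u\ge R_u^S$, $F_u/\rho_u\ge\frac{\eta_uR_u^S}{\zeta_u\eta_u+1-\eta_u}$: $T_u=\frac{D_u}{R_u^S}(\zeta_u\eta_u+1-\eta_u)$, $V_u=\frac{D_u}{c_u}[c_u-R_u^S-(1-\zeta_u)\frac{F_u}{\rho_u}]$; (b) if $\eta_uc_u\ge F_u/\rho_u$, $\zeta_uF_u/\rho_u+(1-\eta_u)c_u\ge R_u^S$, $F_u/\rho_u<\frac{\eta_uR_u^S}{\zeta_u\eta_u+1-\eta_u}$: $T_u=\frac{\eta_uD_u\rho_u}{F_u}$, $V_u=\frac{D_u}{c_u}[c_u-R_u^S-(1-\zeta_u)\frac{F_u}{\rho_u}]$; (c) if $\eta_uc_u\ge F_u/\rho_u$, $\zeta_uF_u/\rho_u+(1-\eta_u)c_u< R_u^S$: $T_u=\frac{\eta_uD_u\rho_u}{F_u}$, $V_u=\frac{D_u}{c_u}(\eta_uc_u-\frac{F_u}{\rho_u})$; (d) if $\eta_uc_u< F_u/\rho_u$, $(\zeta_u\eta_u+1-\eta_u)c_u\ge R_u^S$: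 $T_u=\frac{D_u}{R_u^S}(\zeta_u\eta_u+1-\eta_u)$, $V_u=\frac{D_u}{c_u}[(\zeta_u\eta_u+1-\eta_u)c_u-R_u^S]$; (e) if $\eta_uc_u< F_u/\rho_u$, $(\zeta_u\eta_u+1-\eta_u)c_u< R_u^S$: $T_u=\frac{D_u}{c_u}$, $V_u=0$. The functions $T_u^{\eta\text{-opt}}(B_u,R_u^S,F_u)$ and $V_u^{\eta\text{-opt}}(B_u,R_u^S,F_u)$ are defined by six exhaustive cases (with $c_u=B_ur_u$): 1. $c_u<R_u^S$: $T^{\eta\text{-opt}}_u=\frac{D_u}{c_u}$, $V^{\eta\text{-opt}}_u=0$. 2. $R_u^S\le c_u<\frac{R_u^S}{\zeta_u}$, $\frac{F_u}{\rho_u}<\frac{c_u-R_u^S}{1-\zeta_u}$: $T^{\eta\text{-opt}}_u=\frac{D_u\rho_u}{F_u(1-\zeta_u)+\rho_uR_u^S}$, $V^{\eta\text{-opt}}_u=\frac{D_u}{c_u}[c_u-R_u^S-(1-\zeta_u)\frac{F_u}{\rho_u}]$. 3. $R_u^S\le c_u<\frac{R_u^S}{\zeta_u}$, $\frac{F_u}{\rho_u}\ge\frac{c_u-R_u^S}{1-\zeta_u}$: $T^{\eta\text{-opt}}_u=\frac{D_u}{c_u}$, $V^{\eta\text{-opt}}_u=0$. 4. $c_u\ge\frac{R_u^S}{\zeta_u}$, $\frac{F_u}{\rho_u}<\frac{R_u^S}{\zeta_u}$: $T^{\eta\text{-opt}}_u=\frac{D_u\rho_u}{F_u(1-\zeta_u)+\rho_uR_u^S}$,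 $V^{\eta\text{-opt}}_u=\frac{D_u}{c_u}[c_u-R_u^S-(1-\zeta_u)\frac{F_u}{\rho_u}]$. 5. $c_u\ge\frac{R_u^S}{\zeta_u}$, $\frac{R_u^S}{\zeta_u}\le\frac{F_u}{\rho_u}<c_u$: $T^{\eta\text{-opt}}_u=\frac{\zeta_uD_u}{R_u^S}$, $V^{\eta\text{-opt}}_u=\frac{D_u}{c_u}[c_u-R_u^S-(1-\zeta_u)\frac{F_u}{\rho_u}]$. 6. $c_u\ge\frac{R_u^S}{\zeta_u}$, $\frac{F_u}{\rho_u}\ge c_u$: $T^{\eta\text{-opt}}_u=\frac{\zeta_uD_u}{R_u^S}$, $V^{\eta\text{-opt}}_u=\frac{D_u}{c_u}(\zeta_uc_u-R_u^S)$. *)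

theory Defs
  imports Complex_Main
begin

definition T_user :: "real \<Rightarrow> real \<Rightarrow> real \<Rightarrow> real \<Rightarrow> real \<Rightarrow> real \<Rightarrow> real \<Rightarrow> real \<Rightarrow> real" where
  "T_user D r \<rho> \<zeta> B RS F \<eta> =
    (let c = B * r in
     if \<eta> * c \<ge> F / \<rho> then
       (if \<zeta> * F / \<rho> + (1 - \<eta>) * c \<ge> RS then
          (if F / \<rho> \<ge> \<eta> * RS / (\<zeta> * \<eta> + 1 - \<eta>)
           then D / RS * (\<zeta> * \<eta> + 1 - \<eta>)
           else \<eta> * D * \<rho> / F)
        else \<eta> * D * \<rho> / F)
     else
       (if (\<zeta> * \<eta> + 1 - \<eta>) * c \<ge> RS
        then D / RS * (\<zeta> * \<eta> + 1 - \<eta>)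
        else D / c))"

definition V_user :: "real \<Rightarrow> real \<Rightarrow> real \<Rightarrow> real \<Rightarrow> real \<Rightarrow> real \<Rightarrow> real \<Rightarrow> real \<Rightarrow> real" where
  "V_user D r \<rho> \<zeta> B RS F \<eta> =
    (let c = B * r in
     if \<eta> * c \<ge> F / \<rho> then
       (if \<zeta> * F / \<rho> + (1 - \<eta>) * c \<ge> RS then
          D / c * (c - RS - (1 - \<zeta>) * (F / \<rho>))
        else D / c * (\<eta> * c - F / \<rho>))
     else
       (if (\<zeta> * \<eta> + 1 - \<eta>) * c \<ge> RS
        then D / c * ((\<zeta> * \<eta> + 1 - \<eta>) * c - RS)
        else 0))"

definition T_opt :: "real \<Rightarrow> real \<Rightarrow> real \<Rightarrow> real \<Rightarrow> real \<Rightarrow> real \<Rightarrow> real \<Rightarrow> real" where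
  "T_opt D r \<rho> \<zeta> B RS F =
    (let c = B * r in
     if c < RS then D / c
     else if c < RS / \<zeta> then
       (if F / \<rho> < (c - RS) / (1 - \<zeta>)
        then D * \<rho> / (F * (1 - \<zeta>) + \<rho> * RS)
        else D / c)
     else
       (if F / \<rho> < RS / \<zeta>
        then D * \<rho> / (F * (1 - \<zeta>) + \<rho> * RS)
        else \<zeta> * D / RS))"

definition V_opt :: "real \<Rightarrow> real \<Rightarrow> real \<Rightarrow> real \<Rightarrow> real \<Rightarrow> real \<Rightarrow> real \<Rightarrow> real" where
  "V_opt D r \<rho> \<zeta> B RS F =
    (let c = B * r in
     if c < RS then 0
     else if c < RS / \<zeta> then
       (if F / \<rho> < (c - RS) / (1 - \<zeta>)
        then D / c * (c - RS - (1 - \<zeta>) * (F / \<rho>))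
        else 0)
     else
       (if F / \<rho> < c
        then D / c * (c - RS - (1 - \<zeta>) * (F / \<rho>))
        else D / c * (\<zeta> * c - RS)))"

end

theory Submission
  imports Defs
begin

text \<open>
  Write c = B r and x = F / \<rho>. The case distinctions defining T_user and V_user collapse to
  T_user = D max ((\<zeta>\<eta> + 1 - \<eta>) / R, \<eta> / x, 1 / c) and
  V_user = (D / c) (\<eta>c - y + max (0, \<zeta>y + (1 - \<eta>)c - R)) with y = min (\<eta>c, x).
  For every \<eta> \<in> [0,1] these are at least D max (1 / c, \<zeta> / R, 1 / ((1 - \<zeta>)x + R)) and
  (D / c) max (0, c - R - (1 - \<zeta>) min (x, c)), which are exactly T_opt and V_opt, and a single
  \<eta> attains both bounds. Hence every feasible point of (P2) gives a feasible point of (P1) with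
  the same objective value, every feasible point of (P1) gives one of (P2) with no larger value,
  and the infima coincide.
\<close>

lemma Max_image_mono:
  fixes f g :: "'a \<Rightarrow> 'b::linorder"
  assumes "finite A" "A \<noteq> {}" "\<And>x. x \<in> A \<Longrightarrow> f x \<le> g x"
  shows "Max (f ` A) \<le> Max (g ` A)"
  using assms by (subst Max_le_iff) (auto intro: order_trans[OF _ Max_ge])

lemma cInf_eq_if_subset_dominated:
  fixes S T :: "'a::conditionally_complete_linorder set"
  assumes "T \<subseteq> S" and "\<And>s. s \<in> S \<Longrightarrow> \<exists>t\<in>T. t \<le> s" and "bdd_below T"
  shows "Inf S = Inf T"
proof (cases "S = {}")
  case False
  then have "T \<noteq> {}" using assms(2) by blast
  obtain m where m: "\<And>t. t \<in> T \<Longrightarrow> m \<le> t" using assms(3) by (auto simp: bdd_below_def)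
  have "bdd_below S"
  proof (rule bdd_belowI)
    fix s assume "s \<in> S"
    then obtain t where "t \<in> T" "t \<le> s" using assms(2) by blast
    then show "m \<le> s" using m order_trans by blast
  qed
  show ?thesis
    using cInf_superset_mono[OF \<open>T \<noteq> {}\<close> \<open>bdd_below S\<close> assms(1)] cInf_mono[OF False assms(3,2)]
    by (rule order_antisym)
qed (use assms(1) in simp)

definition T_norm :: "real \<Rightarrow> real \<Rightarrow> real \<Rightarrow> real \<Rightarrow> real \<Rightarrow> real" where
  "T_norm \<zeta> c R x \<eta> = max ((\<zeta> * \<eta> + 1 - \<eta>) / R) (max (\<eta> / x) (1 / c))"

definition V_norm :: "real \<Rightarrow> real \<Rightarrow> real \<Rightarrow> real \<Rightarrow> real \<Rightarrow> real" where
  "V_norm \<zeta> c R x \<eta> =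
     \<eta> * c - min (\<eta> * c) x + max 0 (\<zeta> * min (\<eta> * c) x + (1 - \<eta>) * c - R)"

definition T_opt_norm :: "real \<Rightarrow> real \<Rightarrow> real \<Rightarrow> real \<Rightarrow> real" where
  "T_opt_norm \<zeta> c R x = max (1 / c) (max (\<zeta> / R) (1 / ((1 - \<zeta>) * x + R)))"

definition V_opt_norm :: "real \<Rightarrow> real \<Rightarrow> real \<Rightarrow> real \<Rightarrow> real" where
  "V_opt_norm \<zeta> c R x = max 0 (c - R - (1 - \<zeta>) * min x c)"

lemma zeta_mult_combined_rate_cmp:
  fixes \<zeta> x R :: real
  assumes "\<zeta> < 1"
  shows "\<zeta> * ((1 - \<zeta>) * x + R) < R \<longleftrightarrow> \<zeta> * x < R"
    and "\<zeta> * ((1 - \<zeta>) * x + R) \<le> R \<longleftrightarrow> \<zeta> * x \<le> R"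
proof -
  have "\<zeta> * ((1 - \<zeta>) * x + R) - R = (1 - \<zeta>) * (\<zeta> * x - R)" by (simp add: algebra_simps)
  then show "\<zeta> * ((1 - \<zeta>) * x + R) < R \<longleftrightarrow> \<zeta> * x < R"
    and "\<zeta> * ((1 - \<zeta>) * x + R) \<le> R \<longleftrightarrow> \<zeta> * x \<le> R"
    using assms by (smt (verit) mult_less_0_iff mult_le_0_iff)+
qed

lemma T_user_eq_T_norm:
  assumes "0 < B * r" "0 < RS" "0 < F" "0 < \<rho>" "0 < \<zeta>" "\<zeta> < 1" "0 \<le> \<eta>" "\<eta> \<le> 1"
  shows "T_user D r \<rho> \<zeta> B RS F \<eta> = D * T_norm \<zeta> (B * r) RS (F / \<rho>) \<eta>"
proof -
  define c x a where "c = B * r" and "x = F / \<rho>" and "a = \<zeta> * \<eta> + 1 - \<eta>"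
  have c: "0 < c" and x: "0 < x" and R: "0 < RS" using assms by (auto simp: c_def x_def)
  have "0 \<le> (1 - \<zeta>) * (1 - \<eta>)" using assms by simp
  then have "\<zeta> \<le> a" by (simp add: a_def algebra_simps)
  then have a: "0 < a" using assms by linarith
  have "T_user D r \<rho> \<zeta> B RS F \<eta> = D *
      (if x \<le> \<eta> * c then if RS \<le> \<zeta> * x + (1 - \<eta>) * c \<and> \<eta> * RS \<le> a * x then a / RS else \<eta> / x
       else if RS \<le> a * c then a / RS else 1 / c)"
    using a x unfolding T_user_def Let_def c_def[symmetric] a_def[symmetric]
    by (simp add: x_def pos_divide_le_eq mult.commute)
  also have "\<dots> = D * T_norm \<zeta> c RS x \<eta>"
  proof (cases "x \<le> \<eta> * c")
    case True
    have "1 / c \<le> \<eta> / x" using True c x by (simp add: field_simps)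
    moreover have "a * x < \<eta> * RS" if "\<zeta> * x + (1 - \<eta>) * c < RS"
    proof -
      have "0 < \<eta>" using True c x by (smt (verit) mult_nonpos_nonneg)
      then have "\<eta> * (\<zeta> * x + (1 - \<eta>) * c) < \<eta> * RS" using that by simp
      moreover have "(1 - \<eta>) * x \<le> (1 - \<eta>) * (\<eta> * c)" using True assms by (simp add: mult_left_mono)
      ultimately show ?thesis unfolding a_def by (simp add: algebra_simps)
    qed
    moreover have "\<eta> / x \<le> a / RS \<longleftrightarrow> \<eta> * RS \<le> a * x" using x R by (simp add: field_simps)
    ultimately show ?thesis using True unfolding T_norm_def a_def[symmetric] by (auto simp: max_def)
  next
    case False
    have "\<eta> / x < 1 / c" using False c x by (simp add: field_simps)
    moreover have "1 / c \<le> a / RS \<longleftrightarrow> RS \<le> a * c" using c R by (simp add: field_simps)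
    ultimately show ?thesis using False unfolding T_norm_def a_def[symmetric] by (auto simp: max_def)
  qed
  finally show ?thesis by (simp add: c_def x_def)
qed

lemma V_user_eq_V_norm:
  "V_user D r \<rho> \<zeta> B RS F \<eta> = D / (B * r) * V_norm \<zeta> (B * r) RS (F / \<rho>) \<eta>"
proof -
  define c x where "c = B * r" and "x = F / \<rho>"
  have "V_user D r \<rho> \<zeta> B RS F \<eta> = D / c *
      (if x \<le> \<eta> * c then if RS \<le> \<zeta> * x + (1 - \<eta>) * c then c - RS - (1 - \<zeta>) * x else \<eta> * c - x
       else if RS \<le> (\<zeta> * \<eta> + 1 - \<eta>) * c then (\<zeta> * \<eta> + 1 - \<eta>) * c - RS else 0)"
    unfolding V_user_def Let_def c_def[symmetric] by (simp add: x_def)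
  also have "(if x \<le> \<eta> * c then if RS \<le> \<zeta> * x + (1 - \<eta>) * c then c - RS - (1 - \<zeta>) * x else \<eta> * c - x
       else if RS \<le> (\<zeta> * \<eta> + 1 - \<eta>) * c then (\<zeta> * \<eta> + 1 - \<eta>) * c - RS else 0)
      = V_norm \<zeta> c RS x \<eta>"
    unfolding V_norm_def by (auto simp: min_def max_def algebra_simps)
  finally show ?thesis by (simp add: c_def x_def)
qed

lemma T_opt_eq_T_opt_norm:
  assumes "0 < B * r" "0 < RS" "0 < F" "0 < \<rho>" "0 < \<zeta>" "\<zeta> < 1"
  shows "T_opt D r \<rho> \<zeta> B RS F = D * T_opt_norm \<zeta> (B * r) RS (F / \<rho>)"
proof -
  define c x K where "c = B * r" and "x = F / \<rho>" and "K = (1 - \<zeta>) * x + RS"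
  have c: "0 < c" and x: "0 < x" and R: "0 < RS" using assms by (auto simp: c_def x_def)
  have "0 < (1 - \<zeta>) * x" using assms x by simp
  then have K: "RS < K" by (simp add: K_def)
  have "D * \<rho> / (F * (1 - \<zeta>) + \<rho> * RS) = D * (1 / K)"
    using assms by (simp add: K_def x_def field_simps)
  then have "T_opt D r \<rho> \<zeta> B RS F = D *
      (if c < RS then 1 / c
       else if \<zeta> * c < RS then (if K < c then 1 / K else 1 / c)
       else if \<zeta> * x < RS then 1 / K else \<zeta> / RS)"
    using assms c x unfolding T_opt_def Let_def c_def[symmetric] x_def[symmetric]
    by (simp add: K_def field_simps)
  also have "(if c < RS then 1 / c
       else if \<zeta> * c < RS then (if K < c then 1 / K else 1 / c)
       else if \<zeta> * x < RS then 1 / K else \<zeta> / RS) = T_opt_norm \<zeta> c RS x"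
  proof -
    have "\<zeta> * K < RS \<longleftrightarrow> \<zeta> * x < RS"
      unfolding K_def using \<open>\<zeta> < 1\<close> by (rule zeta_mult_combined_rate_cmp(1))
    moreover have "1 / c \<le> 1 / K \<longleftrightarrow> K \<le> c" "1 / K \<le> 1 / c \<longleftrightarrow> c \<le> K"
      "\<zeta> / RS \<le> 1 / K \<longleftrightarrow> \<zeta> * K \<le> RS" "1 / K \<le> \<zeta> / RS \<longleftrightarrow> RS \<le> \<zeta> * K"
      "1 / c \<le> \<zeta> / RS \<longleftrightarrow> RS \<le> \<zeta> * c" "\<zeta> / RS \<le> 1 / c \<longleftrightarrow> \<zeta> * c \<le> RS"
      using c K R by (simp_all add: field_simps)
    moreover have "K < c \<longleftrightarrow> \<zeta> * K < \<zeta> * c" "\<zeta> * c < c" using assms c by simp_all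
    ultimately show ?thesis unfolding T_opt_norm_def K_def[symmetric] max_def using K by smt
  qed
  finally show ?thesis by (simp add: c_def x_def)
qed

lemma V_opt_eq_V_opt_norm:
  assumes "0 < B * r" "0 < RS" "0 < F" "0 < \<rho>" "0 < \<zeta>" "\<zeta> < 1"
  shows "V_opt D r \<rho> \<zeta> B RS F = D / (B * r) * V_opt_norm \<zeta> (B * r) RS (F / \<rho>)"
proof -
  define c x where "c = B * r" and "x = F / \<rho>"
  have c: "0 < c" and x: "0 < x" and R: "0 < RS" using assms by (auto simp: c_def x_def)
  have "V_opt D r \<rho> \<zeta> B RS F = D / c *
      (if c < RS then 0
       else if \<zeta> * c < RS then (if (1 - \<zeta>) * x + RS < c then c - RS - (1 - \<zeta>) * x else 0)
       else if x < c then c - RS - (1 - \<zeta>) * x else \<zeta> * c - RS)"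
    using assms unfolding V_opt_def Let_def c_def[symmetric] x_def[symmetric]
    by (simp add: field_simps)
  also have "(if c < RS then 0
       else if \<zeta> * c < RS then (if (1 - \<zeta>) * x + RS < c then c - RS - (1 - \<zeta>) * x else 0)
       else if x < c then c - RS - (1 - \<zeta>) * x else \<zeta> * c - RS) = V_opt_norm \<zeta> c RS x"
  proof (cases "x \<le> c")
    case True
    define v where "v = c - RS - (1 - \<zeta>) * x"
    have "(1 - \<zeta>) * x \<le> (1 - \<zeta>) * c" using True assms by simp
    then have "\<zeta> * c - RS \<le> v" by (simp add: v_def algebra_simps)
    moreover have "v < c - RS" using assms x by (simp add: v_def)
    moreover have "v = \<zeta> * c - RS" if "x = c" using that by (simp add: v_def algebra_simps)
    moreover have "(1 - \<zeta>) * x + RS < c \<longleftrightarrow> 0 < v" by (auto simp: v_def)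
    ultimately show ?thesis using True
      unfolding V_opt_norm_def min_absorb1[OF True] v_def[symmetric] by (auto simp: max_def)
  next
    case False
    then have "(1 - \<zeta>) * c < (1 - \<zeta>) * x" using assms by simp
    moreover have "c - RS - (1 - \<zeta>) * c = \<zeta> * c - RS" by (simp add: algebra_simps)
    moreover have "\<zeta> * c < c" using assms c by simp
    ultimately show ?thesis using False
      unfolding V_opt_norm_def min_absorb2[OF less_imp_le[OF not_le_imp_less[OF False]]]
      by (auto simp: max_def algebra_simps)
  qed
  finally show ?thesis by (simp add: c_def x_def)
qed

lemma T_opt_norm_le_T_norm:
  assumes "0 < c" "0 < R" "0 < x" "0 < \<zeta>" "\<zeta> < 1" "0 \<le> \<eta>" "\<eta> \<le> 1"
  shows "T_opt_norm \<zeta> c R x \<le> T_norm \<zeta> c R x \<eta>"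
proof -
  define a K where "a = \<zeta> * \<eta> + 1 - \<eta>" and "K = (1 - \<zeta>) * x + R"
  have T: "T_norm \<zeta> c R x \<eta> = max (max (a / R) (\<eta> / x)) (1 / c)"
    by (simp add: T_norm_def a_def max.assoc)
  have "0 < K" using assms by (simp add: K_def add_pos_pos)
  have "0 \<le> (1 - \<zeta>) * (1 - \<eta>)" using assms by simp
  then have "\<zeta> / R \<le> a / R" using assms by (simp add: a_def divide_right_mono algebra_simps)
  then have "\<zeta> / R \<le> max (a / R) (\<eta> / x)" by (rule max.coboundedI1)
  moreover have "1 / K \<le> max (a / R) (\<eta> / x)"
  proof (rule ccontr)
    assume "\<not> ?thesis"
    then have "a / R < 1 / K" "\<eta> / x < 1 / K" by simp_all
    then have "a * K < R" "\<eta> * K < x" using \<open>0 < K\<close> assms by (simp_all add: field_simps)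
    moreover have "(1 - \<zeta>) * (\<eta> * K) \<le> (1 - \<zeta>) * x" using \<open>\<eta> * K < x\<close> assms by simp
    ultimately show False by (simp add: a_def K_def algebra_simps)
  qed
  ultimately show ?thesis unfolding T_opt_norm_def T K_def[symmetric]
    by (meson max.boundedI max.cobounded2 max.coboundedI1)
qed

lemma V_opt_norm_le_V_norm:
  assumes "0 < c" "0 < \<zeta>" "\<zeta> < 1" "0 \<le> \<eta>" "\<eta> \<le> 1"
  shows "V_opt_norm \<zeta> c R x \<le> V_norm \<zeta> c R x \<eta>"
proof -
  define y m where "y = min (\<eta> * c) x" and "m = min x c"
  define M where "M = max 0 (\<zeta> * y + (1 - \<eta>) * c - R)"
  have "\<eta> * c \<le> c" using assms by (simp add: mult_left_le_one_le)
  then have "y \<le> m" by (simp add: y_def m_def min.coboundedI1)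
  then have "(1 - \<zeta>) * y \<le> (1 - \<zeta>) * m" using assms by simp
  moreover have "y \<le> \<eta> * c" "0 \<le> M" "\<zeta> * y + (1 - \<eta>) * c - R \<le> M" by (simp_all add: y_def M_def)
  ultimately show ?thesis unfolding V_opt_norm_def V_norm_def y_def[symmetric] m_def[symmetric] M_def[symmetric]
    by (intro max.boundedI) (simp_all add: algebra_simps)
qed

lemma T_V_norm_attained_combined_bound:
  assumes "0 < c" "0 < R" "0 < x" "0 < \<zeta>" "\<zeta> < 1"
    and "(1 - \<zeta>) * x + R \<le> c" "\<zeta> * x \<le> R"
  shows "\<exists>\<eta>\<in>{0..1}. T_norm \<zeta> c R x \<eta> = T_opt_norm \<zeta> c R x \<and> V_norm \<zeta> c R x \<eta> = V_opt_norm \<zeta> c R x"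
proof
  define K \<eta> where "K = (1 - \<zeta>) * x + R" and "\<eta> = x / K"
  have "0 < K" "K \<le> c" "x \<le> K" using assms by (simp_all add: K_def add_pos_pos algebra_simps)
  then have "\<eta> * K = x" by (simp add: \<eta>_def)
  show "\<eta> \<in> {0..1}" using \<open>0 < K\<close> \<open>x \<le> K\<close> assms by (simp add: \<eta>_def)
  then have "0 \<le> \<eta>" "0 \<le> 1 - \<eta>" by simp_all
  \<comment> \<open>\<open>\<eta>\<close> is chosen so that \<open>(\<zeta>\<eta> + 1 - \<eta>) / R = \<eta> / x\<close>.\<close>
  have "(\<zeta> * \<eta> + 1 - \<eta>) * K = K - (1 - \<zeta>) * (\<eta> * K)" by (simp add: algebra_simps)
  also have "\<dots> = R" unfolding \<open>\<eta> * K = x\<close> by (simp add: K_def)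
  finally have "(\<zeta> * \<eta> + 1 - \<eta>) * K = R" .
  then have "(\<zeta> * \<eta> + 1 - \<eta>) / R = 1 / K" using \<open>0 < K\<close> assms by (simp add: field_simps)
  moreover have "\<eta> / x = 1 / K" using \<open>0 < K\<close> assms by (simp add: \<eta>_def)
  moreover have "1 / c \<le> 1 / K" "\<zeta> / R \<le> 1 / K"
    using \<open>0 < K\<close> \<open>K \<le> c\<close> assms zeta_mult_combined_rate_cmp(2)[of \<zeta> x R]
    by (simp_all add: K_def field_simps)
  ultimately have "T_norm \<zeta> c R x \<eta> = 1 / K" "T_opt_norm \<zeta> c R x = 1 / K"
    unfolding T_norm_def T_opt_norm_def K_def[symmetric] by (simp_all add: max_def)
  moreover have "V_norm \<zeta> c R x \<eta> = c - K"
  proof -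
    have "x \<le> \<eta> * c" using mult_left_mono[OF \<open>K \<le> c\<close> \<open>0 \<le> \<eta>\<close>] \<open>\<eta> * K = x\<close> by simp
    moreover have "(1 - \<eta>) * K \<le> (1 - \<eta>) * c" using mult_left_mono[OF \<open>K \<le> c\<close> \<open>0 \<le> 1 - \<eta>\<close>] .
    then have "0 \<le> \<zeta> * x + (1 - \<eta>) * c - R" using \<open>\<eta> * K = x\<close> by (simp add: K_def algebra_simps)
    ultimately show ?thesis by (simp add: V_norm_def K_def algebra_simps)
  qed
  moreover have "V_opt_norm \<zeta> c R x = c - K"
    using \<open>K \<le> c\<close> \<open>x \<le> K\<close> by (simp add: V_opt_norm_def K_def algebra_simps)
  ultimately show "T_norm \<zeta> c R x \<eta> = T_opt_norm \<zeta> c R x \<and> V_norm \<zeta> c R x \<eta> = V_opt_norm \<zeta> c R x"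
    by simp
qed

lemma T_V_norm_attained_c_bound:
  assumes "0 < c" "0 < R" "0 < x" "0 < \<zeta>" "\<zeta> < 1"
    and "c \<le> (1 - \<zeta>) * x + R" "\<zeta> * c \<le> R"
  shows "\<exists>\<eta>\<in>{0..1}. T_norm \<zeta> c R x \<eta> = T_opt_norm \<zeta> c R x \<and> V_norm \<zeta> c R x \<eta> = V_opt_norm \<zeta> c R x"
proof -
  have "1 / ((1 - \<zeta>) * x + R) \<le> 1 / c" "\<zeta> / R \<le> 1 / c"
    using assms by (simp_all add: frac_le field_simps)
  then have T_opt: "T_opt_norm \<zeta> c R x = 1 / c" by (simp add: T_opt_norm_def)
  have "c - R - (1 - \<zeta>) * min x c \<le> 0"
    using assms by (cases "x \<le> c") (simp_all add: min_def algebra_simps)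
  then have V_opt: "V_opt_norm \<zeta> c R x = 0" by (simp add: V_opt_norm_def)
  show ?thesis
  proof (cases "c \<le> R")
    case True
    then have "T_norm \<zeta> c R x 0 = 1 / c" "V_norm \<zeta> c R x 0 = 0"
      using assms by (simp_all add: T_norm_def V_norm_def frac_le)
    then show ?thesis using T_opt V_opt by force
  next
    case False
    define \<eta> where "\<eta> = (c - R) / ((1 - \<zeta>) * c)"
    \<comment> \<open>the root of \<open>(\<zeta>\<eta> + 1 - \<eta>) c = R\<close>\<close>
    have "(1 - \<zeta>) * (\<eta> * c) = c - R" using assms by (simp add: \<eta>_def)
    then have ac: "(\<zeta> * \<eta> + 1 - \<eta>) * c = R" by (simp add: algebra_simps)
    have "\<eta> \<in> {0..1}" using assms False by (simp add: \<eta>_def field_simps)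
    have "(1 - \<zeta>) * (\<eta> * c) \<le> (1 - \<zeta>) * x"
      using \<open>(1 - \<zeta>) * (\<eta> * c) = c - R\<close> assms by simp
    then have "\<eta> * c \<le> x" using assms by simp
    then have "\<eta> / x \<le> 1 / c" using assms by (simp add: field_simps)
    moreover have "(\<zeta> * \<eta> + 1 - \<eta>) / R = 1 / c" using ac assms by (simp add: field_simps)
    ultimately have "T_norm \<zeta> c R x \<eta> = 1 / c" by (simp add: T_norm_def)
    moreover have "V_norm \<zeta> c R x \<eta> = 0"
      using \<open>\<eta> * c \<le> x\<close> ac by (simp add: V_norm_def algebra_simps)
    ultimately show ?thesis using \<open>\<eta> \<in> {0..1}\<close> T_opt V_opt by force
  qed
qed

lemma T_V_norm_attained_R_bound:
  assumes "0 < c" "0 < R" "0 < x" "0 < \<zeta>" "\<zeta> < 1"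
    and "R \<le> \<zeta> * x" "R \<le> \<zeta> * c"
  shows "\<exists>\<eta>\<in>{0..1}. T_norm \<zeta> c R x \<eta> = T_opt_norm \<zeta> c R x \<and> V_norm \<zeta> c R x \<eta> = V_opt_norm \<zeta> c R x"
proof -
  have "R \<le> \<zeta> * ((1 - \<zeta>) * x + R)" using assms zeta_mult_combined_rate_cmp(1)[of \<zeta> x R] by simp
  moreover have "0 < (1 - \<zeta>) * x + R" using assms by (simp add: add_pos_pos)
  ultimately have "1 / ((1 - \<zeta>) * x + R) \<le> \<zeta> / R" "1 / x \<le> \<zeta> / R" "1 / c \<le> \<zeta> / R"
    using assms by (simp_all add: field_simps)
  then have T: "T_norm \<zeta> c R x 1 = T_opt_norm \<zeta> c R x"
    by (simp add: T_norm_def T_opt_norm_def)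
  define m where "m = min x c"
  have "R \<le> \<zeta> * m" "(1 - \<zeta>) * m \<le> (1 - \<zeta>) * c" using assms by (simp_all add: m_def min_def)
  then have V: "V_norm \<zeta> c R x 1 = V_opt_norm \<zeta> c R x" using \<open>R \<le> \<zeta> * c\<close>
    by (simp add: max_def V_norm_def V_opt_norm_def min.commute[of c x] m_def[symmetric] algebra_simps)
  show ?thesis using T V by force
qed

lemma T_V_norm_attained:
  assumes "0 < c" "0 < R" "0 < x" "0 < \<zeta>" "\<zeta> < 1"
  shows "\<exists>\<eta>\<in>{0..1}. T_norm \<zeta> c R x \<eta> = T_opt_norm \<zeta> c R x \<and> V_norm \<zeta> c R x \<eta> = V_opt_norm \<zeta> c R x"
proof (cases "\<zeta> * x \<le> R")
  case True
  show ?thesis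
  proof (cases "(1 - \<zeta>) * x + R \<le> c")
    case False
    have "\<zeta> * c < \<zeta> * ((1 - \<zeta>) * x + R)" using False assms by simp
    moreover have "\<zeta> * ((1 - \<zeta>) * x + R) \<le> R" using True assms zeta_mult_combined_rate_cmp(2) by blast
    ultimately have "\<zeta> * c \<le> R" by linarith
    with False show ?thesis by (intro T_V_norm_attained_c_bound[OF assms]) simp_all
  qed (rule T_V_norm_attained_combined_bound[OF assms _ True])
next
  case False
  show ?thesis
  proof (cases "R \<le> \<zeta> * c")
    case False
    have "R < \<zeta> * ((1 - \<zeta>) * x + R)"
      using \<open>\<not> \<zeta> * x \<le> R\<close> assms zeta_mult_combined_rate_cmp(2) by (meson not_le)
    with False have "\<zeta> * c < \<zeta> * ((1 - \<zeta>) * x + R)" by simp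
    with False show ?thesis using assms by (intro T_V_norm_attained_c_bound[OF assms]) simp_all
  qed (use False in \<open>simp add: T_V_norm_attained_R_bound[OF assms]\<close>)
qed

lemma T_opt_le_T_user:
  assumes "0 \<le> D" "0 < r" "0 < \<rho>" "0 < \<zeta>" "\<zeta> < 1" "0 < B" "0 < RS" "0 < F"
    and "0 \<le> \<eta>" "\<eta> \<le> 1"
  shows "T_opt D r \<rho> \<zeta> B RS F \<le> T_user D r \<rho> \<zeta> B RS F \<eta>"
proof -
  have "T_opt_norm \<zeta> (B * r) RS (F / \<rho>) \<le> T_norm \<zeta> (B * r) RS (F / \<rho>) \<eta>"
    using assms by (intro T_opt_norm_le_T_norm) simp_all
  then show ?thesis using assms
    by (simp add: T_opt_eq_T_opt_norm T_user_eq_T_norm mult_left_mono)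
qed

lemma V_opt_le_V_user:
  assumes "0 \<le> D" "0 < r" "0 < \<rho>" "0 < \<zeta>" "\<zeta> < 1" "0 < B" "0 < RS" "0 < F"
    and "0 \<le> \<eta>" "\<eta> \<le> 1"
  shows "V_opt D r \<rho> \<zeta> B RS F \<le> V_user D r \<rho> \<zeta> B RS F \<eta>"
proof -
  have "V_opt D r \<rho> \<zeta> B RS F = D / (B * r) * V_opt_norm \<zeta> (B * r) RS (F / \<rho>)"
    using assms by (simp add: V_opt_eq_V_opt_norm)
  also have "\<dots> \<le> D / (B * r) * V_norm \<zeta> (B * r) RS (F / \<rho>) \<eta>"
    using assms by (intro mult_left_mono V_opt_norm_le_V_norm) simp_all
  also have "\<dots> = V_user D r \<rho> \<zeta> B RS F \<eta>"
    using assms by (simp add: V_user_eq_V_norm)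
  finally show ?thesis .
qed

lemma T_opt_nonneg:
  assumes "0 \<le> D" "0 < r" "0 < \<rho>" "0 < \<zeta>" "\<zeta> < 1" "0 < B" "0 < RS" "0 < F"
  shows "0 \<le> T_opt D r \<rho> \<zeta> B RS F"
proof -
  have "0 \<le> T_opt_norm \<zeta> (B * r) RS (F / \<rho>)"
    using assms by (simp add: T_opt_norm_def le_max_iff_disj)
  then show ?thesis using assms by (simp add: T_opt_eq_T_opt_norm)
qed

lemma T_V_user_attain_opt:
  assumes "0 < r" "0 < \<rho>" "0 < \<zeta>" "\<zeta> < 1" "0 < B" "0 < RS" "0 < F"
  shows "\<exists>\<eta>\<in>{0..1}. T_user D r \<rho> \<zeta> B RS F \<eta> = T_opt D r \<rho> \<zeta> B RS F
                   \<and> V_user D r \<rho> \<zeta> B RS F \<eta> = V_opt D r \<rho> \<zeta> B RS F"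
proof -
  obtain \<eta> where "\<eta> \<in> {0..1}" and "T_norm \<zeta> (B * r) RS (F / \<rho>) \<eta> = T_opt_norm \<zeta> (B * r) RS (F / \<rho>)"
    and "V_norm \<zeta> (B * r) RS (F / \<rho>) \<eta> = V_opt_norm \<zeta> (B * r) RS (F / \<rho>)"
    using T_V_norm_attained[of "B * r" RS "F / \<rho>" \<zeta>] assms by auto
  then show ?thesis using assms
    by (auto simp: T_opt_eq_T_opt_norm T_user_eq_T_norm V_opt_eq_V_opt_norm V_user_eq_V_norm)
qed

definition P1_values ::
    "'u set \<Rightarrow> ('u \<Rightarrow> real) \<Rightarrow> ('u \<Rightarrow> real) \<Rightarrow> ('u \<Rightarrow> real) \<Rightarrow> ('u \<Rightarrow> real)
      \<Rightarrow> real \<Rightarrow> real \<Rightarrow> real \<Rightarrow> real \<Rightarrow> real set" where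
  "P1_values I D r \<rho> \<zeta> V_total B_total RS_total F_total =
     {Max ((\<lambda>u. T_user (D u) (r u) (\<rho> u) (\<zeta> u) (B u) (RS u) (F u) (\<eta> u)) ` I)
      | B RS F \<eta>.
        (\<forall>u\<in>I. B u > 0 \<and> RS u > 0 \<and> F u > 0 \<and> 0 \<le> \<eta> u \<and> \<eta> u \<le> 1) \<and>
        (\<Sum>u\<in>I. V_user (D u) (r u) (\<rho> u) (\<zeta> u) (B u) (RS u) (F u) (\<eta> u)) \<le> V_total \<and>
        (\<Sum>u\<in>I. B u) \<le> B_total \<and>
        (\<Sum>u\<in>I. RS u) \<le> RS_total \<and>
        (\<Sum>u\<in>I. F u) \<le> F_total}"

definition P2_values ::
    "'u set \<Rightarrow> ('u \<Rightarrow> real) \<Rightarrow> ('u \<Rightarrow> real) \<Rightarrow> ('u \<Rightarrow> real) \<Rightarrow> ('u \<Rightarrow> real)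
      \<Rightarrow> real \<Rightarrow> real \<Rightarrow> real \<Rightarrow> real \<Rightarrow> real set" where
  "P2_values I D r \<rho> \<zeta> V_total B_total RS_total F_total =
     {Max ((\<lambda>u. T_opt (D u) (r u) (\<rho> u) (\<zeta> u) (B u) (RS u) (F u)) ` I)
      | B RS F.
        (\<forall>u\<in>I. B u > 0 \<and> RS u > 0 \<and> F u > 0) \<and>
        (\<Sum>u\<in>I. V_opt (D u) (r u) (\<rho> u) (\<zeta> u) (B u) (RS u) (F u)) \<le> V_total \<and>
        (\<Sum>u\<in>I. B u) \<le> B_total \<and>
        (\<Sum>u\<in>I. RS u) \<le> RS_total \<and>
        (\<Sum>u\<in>I. F u) \<le> F_total}"

lemma P2_values_subset_P1_values:
  assumes "\<forall>u\<in>I. 0 < r u \<and> 0 < \<rho> u \<and> 0 < \<zeta> u \<and> \<zeta> u < 1"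
  shows "P2_values I D r \<rho> \<zeta> V_total B_total RS_total F_total
           \<subseteq> P1_values I D r \<rho> \<zeta> V_total B_total RS_total F_total"
proof
  fix y assume "y \<in> P2_values I D r \<rho> \<zeta> V_total B_total RS_total F_total"
  then obtain B RS F
    where y: "y = Max ((\<lambda>u. T_opt (D u) (r u) (\<rho> u) (\<zeta> u) (B u) (RS u) (F u)) ` I)"
      and pos: "\<forall>u\<in>I. B u > 0 \<and> RS u > 0 \<and> F u > 0"
      and V: "(\<Sum>u\<in>I. V_opt (D u) (r u) (\<rho> u) (\<zeta> u) (B u) (RS u) (F u)) \<le> V_total"
      and budgets: "(\<Sum>u\<in>I. B u) \<le> B_total" "(\<Sum>u\<in>I. RS u) \<le> RS_total" "(\<Sum>u\<in>I. F u) \<le> F_total"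
    unfolding P2_values_def by blast
  have "\<forall>u\<in>I. \<exists>e. e \<in> {0..1}
      \<and> T_user (D u) (r u) (\<rho> u) (\<zeta> u) (B u) (RS u) (F u) e = T_opt (D u) (r u) (\<rho> u) (\<zeta> u) (B u) (RS u) (F u)
      \<and> V_user (D u) (r u) (\<rho> u) (\<zeta> u) (B u) (RS u) (F u) e = V_opt (D u) (r u) (\<rho> u) (\<zeta> u) (B u) (RS u) (F u)"
    using T_V_user_attain_opt assms pos by blast
  then obtain \<eta> where \<eta>: "\<forall>u\<in>I. \<eta> u \<in> {0..1}
      \<and> T_user (D u) (r u) (\<rho> u) (\<zeta> u) (B u) (RS u) (F u) (\<eta> u) = T_opt (D u) (r u) (\<rho> u) (\<zeta> u) (B u) (RS u) (F u)
      \<and> V_user (D u) (r u) (\<rho> u) (\<zeta> u) (B u) (RS u) (F u) (\<eta> u) = V_opt (D u) (r u) (\<rho> u) (\<zeta> u) (B u) (RS u) (F u)"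
    by (rule bchoice[THEN exE])
  have "y = Max ((\<lambda>u. T_user (D u) (r u) (\<rho> u) (\<zeta> u) (B u) (RS u) (F u) (\<eta> u)) ` I)"
    unfolding y using \<eta> by (intro arg_cong[where f = Max] image_cong) auto
  moreover have "(\<Sum>u\<in>I. V_user (D u) (r u) (\<rho> u) (\<zeta> u) (B u) (RS u) (F u) (\<eta> u)) \<le> V_total"
    using V \<eta> by (metis (no_types, lifting) sum.cong)
  ultimately show "y \<in> P1_values I D r \<rho> \<zeta> V_total B_total RS_total F_total"
    unfolding P1_values_def using pos \<eta> budgets by fastforce
qed

lemma P1_values_dominated:
  assumes "finite I" "I \<noteq> {}" "\<forall>u\<in>I. 0 \<le> D u \<and> 0 < r u \<and> 0 < \<rho> u \<and> 0 < \<zeta> u \<and> \<zeta> u < 1"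
    and "y \<in> P1_values I D r \<rho> \<zeta> V_total B_total RS_total F_total"
  shows "\<exists>w\<in>P2_values I D r \<rho> \<zeta> V_total B_total RS_total F_total. w \<le> y"
proof -
  obtain B RS F \<eta>
    where y: "y = Max ((\<lambda>u. T_user (D u) (r u) (\<rho> u) (\<zeta> u) (B u) (RS u) (F u) (\<eta> u)) ` I)"
      and pos: "\<forall>u\<in>I. B u > 0 \<and> RS u > 0 \<and> F u > 0 \<and> 0 \<le> \<eta> u \<and> \<eta> u \<le> 1"
      and V: "(\<Sum>u\<in>I. V_user (D u) (r u) (\<rho> u) (\<zeta> u) (B u) (RS u) (F u) (\<eta> u)) \<le> V_total"
      and budgets: "(\<Sum>u\<in>I. B u) \<le> B_total" "(\<Sum>u\<in>I. RS u) \<le> RS_total" "(\<Sum>u\<in>I. F u) \<le> F_total"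
    using assms(4) unfolding P1_values_def by blast
  define w where "w = Max ((\<lambda>u. T_opt (D u) (r u) (\<rho> u) (\<zeta> u) (B u) (RS u) (F u)) ` I)"
  have "\<forall>u\<in>I. T_opt (D u) (r u) (\<rho> u) (\<zeta> u) (B u) (RS u) (F u)
      \<le> T_user (D u) (r u) (\<rho> u) (\<zeta> u) (B u) (RS u) (F u) (\<eta> u)"
    using assms(3) pos by (simp add: T_opt_le_T_user)
  then have "w \<le> y" unfolding w_def y using assms(1,2) by (intro Max_image_mono) auto
  have "(\<Sum>u\<in>I. V_opt (D u) (r u) (\<rho> u) (\<zeta> u) (B u) (RS u) (F u))
      \<le> (\<Sum>u\<in>I. V_user (D u) (r u) (\<rho> u) (\<zeta> u) (B u) (RS u) (F u) (\<eta> u))"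
    using assms(3) pos by (intro sum_mono) (simp add: V_opt_le_V_user)
  with V have "w \<in> P2_values I D r \<rho> \<zeta> V_total B_total RS_total F_total"
    unfolding P2_values_def w_def using pos budgets by (blast intro: order_trans)
  then show ?thesis using \<open>w \<le> y\<close> by blast
qed

lemma P2_values_nonneg:
  assumes "finite I" "I \<noteq> {}" "\<forall>u\<in>I. 0 \<le> D u \<and> 0 < r u \<and> 0 < \<rho> u \<and> 0 < \<zeta> u \<and> \<zeta> u < 1"
    and "w \<in> P2_values I D r \<rho> \<zeta> V_total B_total RS_total F_total"
  shows "0 \<le> w"
proof -
  obtain B RS F where w: "w = Max ((\<lambda>u. T_opt (D u) (r u) (\<rho> u) (\<zeta> u) (B u) (RS u) (F u)) ` I)"
    and pos: "\<forall>u\<in>I. B u > 0 \<and> RS u > 0 \<and> F u > 0"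
    using assms(4) unfolding P2_values_def by blast
  show ?thesis unfolding w using assms(1-3) pos by (auto simp: Max_ge_iff T_opt_nonneg)
qed

theorem theorem2:
  fixes U :: nat and D r \<rho> \<zeta> :: "nat \<Rightarrow> real"
    and V_total B_total RS_total F_total :: real
  assumes "U \<ge> 1"
    and "\<forall>u\<in>{1..U}. D u > 0 \<and> r u > 0 \<and> \<rho> u > 0 \<and> 0 < \<zeta> u \<and> \<zeta> u < 1"
    and "V_total \<ge> 0" and "B_total > 0" and "RS_total > 0" and "F_total > 0"
  shows "Inf {Max ((\<lambda>u. T_user (D u) (r u) (\<rho> u) (\<zeta> u) (B u) (RS u) (F u) (\<eta> u)) ` {1..U})
             | B RS F \<eta>.
               (\<forall>u\<in>{1..U}. B u > 0 \<and> RS u > 0 \<and> F u > 0 \<and> 0 \<le> \<eta> u \<and> \<eta> u \<le> 1) \<and>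
               (\<Sum>u\<in>{1..U}. V_user (D u) (r u) (\<rho> u) (\<zeta> u) (B u) (RS u) (F u) (\<eta> u)) \<le> V_total \<and>
               (\<Sum>u\<in>{1..U}. B u) \<le> B_total \<and>
               (\<Sum>u\<in>{1..U}. RS u) \<le> RS_total \<and>
               (\<Sum>u\<in>{1..U}. F u) \<le> F_total}
       = Inf {Max ((\<lambda>u. T_opt (D u) (r u) (\<rho> u) (\<zeta> u) (B u) (RS u) (F u)) ` {1..U})
             | B RS F.
               (\<forall>u\<in>{1..U}. B u > 0 \<and> RS u > 0 \<and> F u > 0) \<and>
               (\<Sum>u\<in>{1..U}. V_opt (D u) (r u) (\<rho> u) (\<zeta> u) (B u) (RS u) (F u)) \<le> V_total \<and>
               (\<Sum>u\<in>{1..U}. B u) \<le> B_total \<and>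
               (\<Sum>u\<in>{1..U}. RS u) \<le> RS_total \<and>
               (\<Sum>u\<in>{1..U}. F u) \<le> F_total}"
proof -
  let ?P1 = "P1_values {1..U} D r \<rho> \<zeta> V_total B_total RS_total F_total"
  let ?P2 = "P2_values {1..U} D r \<rho> \<zeta> V_total B_total RS_total F_total"
  have I: "finite {1..U}" "{1..U} \<noteq> {}" using assms(1) by auto
  have params: "\<forall>u\<in>{1..U}. 0 \<le> D u \<and> 0 < r u \<and> 0 < \<rho> u \<and> 0 < \<zeta> u \<and> \<zeta> u < 1"
    using assms(2) by fastforce
  have "Inf ?P1 = Inf ?P2"
  proof (rule cInf_eq_if_subset_dominated)
    show "?P2 \<subseteq> ?P1" using params by (intro P2_values_subset_P1_values) blast
    show "\<exists>w\<in>?P2. w \<le> y" if "y \<in> ?P1" for y using P1_values_dominated[OF I params that] .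
    show "bdd_below ?P2" using P2_values_nonneg[OF I params] by (intro bdd_belowI) blast
  qed
  then show ?thesis unfolding P1_values_def P2_values_def .
qed

end
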